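(* Let $\beta$ be a parameter and consider the map $\varphi:(x_0,x_1,x_2,x_3)\mapsto\big(x_1,x_2,x_3,(x_1x_3+\beta x_2)/x_0\big)$ on $\mathbb{C}^4$, equivalently the recurrence $$x_{n+2}x_{n-2}=x_{n+1}x_{n-1}+\beta\,x_n.$$ Define $$\mathcal{C}_0=\frac{x_0x_3+x_1^2+x_2^2}{x_1x_2},\quad \mathcal{C}_1=\frac{x_0x_3^2+x_1^2x_3+x_0x_2^2+\beta x_1x_2}{x_0x_2x_3},\quad \mathcal{C}_2=\frac{x_0^2x_3+x_1^2x_3+x_0x_2^2+\beta x_1x_2}{x_0x_1x_3},$$ and $$\mathcal{J}_1=\mathcal{C}_0\mathcal{C}_1\mathcal{C}_2-\mathcal{C}_0^2-\mathcal{C}_1^2-\mathcal{C}_2^2+2,\qquad \mathcal{J}_2=\mathcal{C}_0+\mathcal{C}_1+\mathcal{C}_2,\qquad \mathcal{J}_3=\mathcal{C}_0\mathcal{C}_1\mathcal{C}_2.$$ Then $\varphi$ is superintegrable: $\mathcal{J}_1,\mathcal{J}_2,\mathcal{J}_3$ are three independent conserved quantities of $\varphi$, and $\{\mathcal{J}_1,\mathcal{J}_2\}_1=0=\{\mathcal{J}_1,\mathcal{J}_3\}_1$, where $\{\cdot,\cdot\}_1$ is the Poisson bracket defined by $\{x_0,x_1\}_1=x_0x_1$, $\{x_0,x_2\}_1=x_0x_2$, $\{x_0,x_3\}_1=2x_0x_3$, $\{x_1,x_2\}_1=x_1x_2$, $\{x_1,x_3\}_1=x_1x_3$, $\{x_2,x_3\}_1=x_2x_3$.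 The iterates also satisfy the ninth-order linear recurrence $$x_{n+9}-(\mathcal{J}_1+1)(x_{n+6}-x_{n+3})-x_n=0,$$ and the solution of the initial value problem is $$x_{3n+j}=\mathcal{A}_j\,T_n(\mathcal{J}_1/2)+\mathcal{B}_j\,U_n(\mathcal{J}_1/2)+\beta\,\mathcal{C}_j/(\mathcal{J}_1-2),\qquad j=0,1,2,$$ where $T_n,U_n$ are the Chebyshev polynomials of the first and second kind and $$\mathcal{A}_j=2x_j-\frac{2x_{j+3}}{\mathcal{J}_1}-\frac{2\beta\,\mathcal{C}_j(\mathcal{J}_1-1)}{\mathcal{J}_1(\mathcal{J}_1-2)},\qquad \mathcal{B}_j=-x_j+\frac{2x_{j+3}+\beta\,\mathcal{C}_j}{\mathcal{J}_1},\qquad j=0,1,2.$$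
   Context: A conserved quantity of $\varphi$ is a function $F$ on $\mathbb{C}^4$ with $F\circ\varphi=F$. Superintegrable here means having $3$ (one less than the phase-space dimension) independent conserved quantities. The Poisson bracket is extended to rational functions by bilinearity and the Leibniz rule. The $\mathcal{C}_j$ and $\mathcal{J}_1$ are evaluated at the initial data $(x_0,x_1,x_2,x_3)$, and $x_3,x_4,x_5$ denote iterates of the recurrence. *)

theory Defs
  imports "HOL-Analysis.Analysis"
begin

definition phi :: "complex \<Rightarrow> complex^4 \<Rightarrow> complex^4" where
  "phi \<beta> x = (\<chi> i. if i = 0 then x$1 else if i = 1 then x$2 else if i = 2 then x$3
                          else (x$1 * x$3 + \<beta> * x$2) / x$0)"

definition C0 :: "complex \<Rightarrow> complex^4 \<Rightarrow> complex" where
  "C0 \<beta> x = (x$0 * x$3 + (x$1)^2 + (x$2)^2) / (x$1 * x$2)"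

definition C1 :: "complex \<Rightarrow> complex^4 \<Rightarrow> complex" where
  "C1 \<beta> x = (x$0 * (x$3)^2 + (x$1)^2 * x$3 + x$0 * (x$2)^2 + \<beta> * x$1 * x$2)
              / (x$0 * x$2 * x$3)"

definition C2 :: "complex \<Rightarrow> complex^4 \<Rightarrow> complex" where
  "C2 \<beta> x = ((x$0)^2 * x$3 + (x$1)^2 * x$3 + x$0 * (x$2)^2 + \<beta> * x$1 * x$2)
              / (x$0 * x$1 * x$3)"

definition Cj :: "complex \<Rightarrow> nat \<Rightarrow> complex^4 \<Rightarrow> complex" where
  "Cj \<beta> j = (if j = 0 then C0 \<beta> else if j = 1 then C1 \<beta> else C2 \<beta>)"

definition J1 :: "complex \<Rightarrow> complex^4 \<Rightarrow> complex" where
  "J1 \<beta> x = C0 \<beta> x * C1 \<beta> x * C2 \<beta> x - (C0 \<beta> x)^2 - (C1 \<beta> x)^2 - (C2 \<beta> x)^2 + 2"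

definition J2 :: "complex \<Rightarrow> complex^4 \<Rightarrow> complex" where
  "J2 \<beta> x = C0 \<beta> x + C1 \<beta> x + C2 \<beta> x"

definition J3 :: "complex \<Rightarrow> complex^4 \<Rightarrow> complex" where
  "J3 \<beta> x = C0 \<beta> x * C1 \<beta> x * C2 \<beta> x"

text \<open>Domain where all the rational functions above are defined: all coordinates nonzero.\<close>
definition dom4 :: "(complex^4) set" where
  "dom4 = {x. \<forall>i. x$i \<noteq> 0}"

definition pd :: "4 \<Rightarrow> (complex^4 \<Rightarrow> complex) \<Rightarrow> complex^4 \<Rightarrow> complex" where
  "pd i F x = deriv (\<lambda>t. F (\<chi> k. if k = i then t else x$k)) (x$i)"

definition grad :: "(complex^4 \<Rightarrow> complex) \<Rightarrow> complex^4 \<Rightarrow> complex^4" where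
  "grad F x = (\<chi> i. pd i F x)"

text \<open>Structure functions {x_i, x_j}_1 of the quadratic Poisson bracket.\<close>
definition wcoef :: "4 \<Rightarrow> 4 \<Rightarrow> complex" where
  "wcoef i j =
     (if (i, j) = (0, 3) then 2 else if (i, j) = (3, 0) then -2
      else if (i, j) \<in> {(0, 1), (0, 2), (1, 2), (1, 3), (2, 3)} then 1
      else if (i, j) \<in> {(1, 0), (2, 0), (2, 1), (3, 1), (3, 2)} then -1
      else 0)"

definition pstruct :: "complex^4 \<Rightarrow> 4 \<Rightarrow> 4 \<Rightarrow> complex" where
  "pstruct x i j = wcoef i j * x$i * x$j"

text \<open>The Poisson bracket {F,G}_1 extended by bilinearity and the Leibniz rule.\<close>
definition pbracket :: "(complex^4 \<Rightarrow> complex) \<Rightarrow> (complex^4 \<Rightarrow> complex) \<Rightarrow> complex^4 \<Rightarrow> complex" where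
  "pbracket F G x = (\<Sum>i\<in>UNIV. \<Sum>j\<in>UNIV. pd i F x * pd j G x * pstruct x i j)"

fun chebT :: "nat \<Rightarrow> complex \<Rightarrow> complex" where
  "chebT 0 z = 1"
| "chebT (Suc 0) z = z"
| "chebT (Suc (Suc n)) z = 2 * z * chebT (Suc n) z - chebT n z"

fun chebU :: "nat \<Rightarrow> complex \<Rightarrow> complex" where
  "chebU 0 z = 1"
| "chebU (Suc 0) z = 2 * z"
| "chebU (Suc (Suc n)) z = 2 * z * chebU (Suc n) z - chebU n z"

definition init4 :: "(nat \<Rightarrow> complex) \<Rightarrow> complex^4" where
  "init4 x = (\<chi> i. if i = 0 then x 0 else if i = 1 then x 1 else if i = 2 then x 2 else x 3)"

end

theory Submission
  imports Defs
begin

(*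
  The map phi permutes the C_j cyclically (C0 o phi = C1, C1 o phi = C2, C2 o phi = C0), so every
  symmetric function of C0, C1, C2, in particular J1, J2, J3, is conserved.

  Under the bracket the C_j close into the cubic algebra {C0, C1} = C0 C1 - 2 C2 (and cyclically),
  whose Casimir is C0 C1 C2 - C0^2 - C1^2 - C2^2 = J1 - 2; hence J1 commutes with every function of
  the C_j, in particular with J2 and J3.

  The Jacobian of (J1, J2, J3) with respect to (C0, C1, C2) is 2 (C0 - C1) (C1 - C2) (C2 - C0), so the
  J_i are independent wherever the C_j are distinct and have independent gradients; this happens at
  t (1, 1, 1, 3) for t = 1 or t = beta.

  Along an orbit, eliminating x_(n+4) and x_(n+5) gives x_(n+6) - J1 x_(n+3) + x_n = - beta C0 at
  (x_n, ..., x_(n+3)), and C0 of these windows has period 3.  Differencing yields the ninth-order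
  recurrence, and for each j the subsequence x_(3n+j) solves y_(m+2) = J1 y_(m+1) - y_m - beta C_j,
  which is a Chebyshev recurrence at J1/2 shifted by the constant solution beta C_j / (J1 - 2).
*)

lemma exhaust_4_from_0: "(i::4) = 0 \<or> i = 1 \<or> i = 2 \<or> i = 3"
  using exhaust_4[of i] by auto

lemma UNIV_4_from_0: "(UNIV :: 4 set) = {0, 1, 2, 3}"
  using exhaust_4_from_0 by auto

lemma sum_UNIV_4_from_0: "sum f (UNIV :: 4 set) = f 0 + f 1 + f 2 + f 3"
  unfolding UNIV_4_from_0 by (simp add: ac_simps)

lemma dom4_iff: "x \<in> dom4 \<longleftrightarrow> x$0 \<noteq> 0 \<and> x$1 \<noteq> 0 \<and> x$2 \<noteq> 0 \<and> x$3 \<noteq> 0"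
  unfolding dom4_def mem_Collect_eq by (metis exhaust_4_from_0)

section \<open>Partial derivatives\<close>

definition coord_line :: "complex^4 \<Rightarrow> 4 \<Rightarrow> complex \<Rightarrow> complex^4" where
  "coord_line x i t = (\<chi> k. if k = i then t else x$k)"

lemma coord_line_self [simp]: "coord_line x i (x$i) = x"
  by (simp add: coord_line_def vec_eq_iff)

lemma has_field_derivative_coord_line:
  "((\<lambda>t. coord_line x i t $ j) has_field_derivative (if j = i then 1 else 0)) (at z)"
  by (cases "j = i") (auto simp: coord_line_def)

lemma pd_eq_deriv_coord_line: "pd i F x = deriv (\<lambda>t. F (coord_line x i t)) (x$i)"
  by (simp add: pd_def coord_line_def)

lemma pd_eqI: "((\<lambda>t. F (coord_line x i t)) has_field_derivative D) (at (x$i)) \<Longrightarrow> pd i F x = D"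
  unfolding pd_eq_deriv_coord_line by (rule DERIV_imp_deriv)

lemma has_field_derivative_pd:
  "(\<lambda>t. F (coord_line x i t)) field_differentiable at (x$i) \<Longrightarrow>
   ((\<lambda>t. F (coord_line x i t)) has_field_derivative pd i F x) (at (x$i))"
  unfolding pd_eq_deriv_coord_line by (simp add: DERIV_deriv_iff_field_differentiable)

lemma field_differentiable_C_coord_line:
  assumes "x \<in> dom4"
  shows "(\<lambda>t. C0 \<beta> (coord_line x i t)) field_differentiable at (x$i)"
    and "(\<lambda>t. C1 \<beta> (coord_line x i t)) field_differentiable at (x$i)"
    and "(\<lambda>t. C2 \<beta> (coord_line x i t)) field_differentiable at (x$i)"
  using assms unfolding field_differentiable_def dom4_iff C0_def C1_def C2_def
  by (auto intro!: exI derivative_eq_intros has_field_derivative_coord_line)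

lemmas has_field_derivative_pd_C =
  field_differentiable_C_coord_line[THEN has_field_derivative_pd]

lemma pd_C0:
  assumes "x \<in> dom4"
  shows "pd 0 (C0 \<beta>) x = x$3 / (x$1 * x$2)"
    and "pd 1 (C0 \<beta>) x = ((x$1)^2 - x$0 * x$3 - (x$2)^2) / ((x$1)^2 * x$2)"
    and "pd 2 (C0 \<beta>) x = ((x$2)^2 - x$0 * x$3 - (x$1)^2) / (x$1 * (x$2)^2)"
    and "pd 3 (C0 \<beta>) x = x$0 / (x$1 * x$2)"
  using assms unfolding dom4_iff C0_def
  by - (rule pd_eqI; auto intro!: derivative_eq_intros has_field_derivative_coord_line
      simp: field_simps power2_eq_square)+

lemma pd_C1:
  assumes "x \<in> dom4"
  shows "pd 0 (C1 \<beta>) x = - x$1 * (x$1 * x$3 + \<beta> * x$2) / ((x$0)^2 * x$2 * x$3)"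
    and "pd 1 (C1 \<beta>) x = (2 * x$1 * x$3 + \<beta> * x$2) / (x$0 * x$2 * x$3)"
    and "pd 2 (C1 \<beta>) x = (x$0 * (x$2)^2 - x$0 * (x$3)^2 - (x$1)^2 * x$3) / (x$0 * (x$2)^2 * x$3)"
    and "pd 3 (C1 \<beta>) x = (x$0 * (x$3)^2 - x$0 * (x$2)^2 - \<beta> * x$1 * x$2) / (x$0 * x$2 * (x$3)^2)"
  using assms unfolding dom4_iff C1_def
  by - (rule pd_eqI; auto intro!: derivative_eq_intros has_field_derivative_coord_line
      simp: field_simps power2_eq_square)+

lemma pd_C2:
  assumes "x \<in> dom4"
  shows "pd 0 (C2 \<beta>) x = ((x$0)^2 * x$3 - (x$1)^2 * x$3 - \<beta> * x$1 * x$2) / ((x$0)^2 * x$1 * x$3)"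
    and "pd 1 (C2 \<beta>) x = ((x$1)^2 * x$3 - (x$0)^2 * x$3 - x$0 * (x$2)^2) / (x$0 * (x$1)^2 * x$3)"
    and "pd 2 (C2 \<beta>) x = (2 * x$0 * x$2 + \<beta> * x$1) / (x$0 * x$1 * x$3)"
    and "pd 3 (C2 \<beta>) x = - x$2 * (x$0 * x$2 + \<beta> * x$1) / (x$0 * x$1 * (x$3)^2)"
  using assms unfolding dom4_iff C2_def
  by - (rule pd_eqI; auto intro!: derivative_eq_intros has_field_derivative_coord_line
      simp: field_simps power2_eq_square)+

lemma grad_J1:
  assumes "x \<in> dom4"
  shows "grad (J1 \<beta>) x = (C1 \<beta> x * C2 \<beta> x - 2 * C0 \<beta> x) *s grad (C0 \<beta>) x
    + (C0 \<beta> x * C2 \<beta> x - 2 * C1 \<beta> x) *s grad (C1 \<beta>) x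
    + (C0 \<beta> x * C1 \<beta> x - 2 * C2 \<beta> x) *s grad (C2 \<beta>) x"
proof -
  have deriv: "((\<lambda>t. J1 \<beta> (coord_line x i t)) has_field_derivative
      (C1 \<beta> x * C2 \<beta> x - 2 * C0 \<beta> x) * pd i (C0 \<beta>) x
    + (C0 \<beta> x * C2 \<beta> x - 2 * C1 \<beta> x) * pd i (C1 \<beta>) x
    + (C0 \<beta> x * C1 \<beta> x - 2 * C2 \<beta> x) * pd i (C2 \<beta>) x) (at (x$i))" for i
    unfolding J1_def
    by (rule derivative_eq_intros has_field_derivative_pd_C[OF assms] refl)+
      (simp add: algebra_simps power2_eq_square)
  show ?thesis
    unfolding vec_eq_iff grad_def
    by (simp only: pd_eqI[OF deriv] vector_add_component vector_smult_component vec_lambda_beta simp_thms)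
qed

lemma grad_J2:
  assumes "x \<in> dom4"
  shows "grad (J2 \<beta>) x = grad (C0 \<beta>) x + grad (C1 \<beta>) x + grad (C2 \<beta>) x"
proof -
  have deriv: "((\<lambda>t. J2 \<beta> (coord_line x i t)) has_field_derivative
      pd i (C0 \<beta>) x + pd i (C1 \<beta>) x + pd i (C2 \<beta>) x) (at (x$i))" for i
    unfolding J2_def by (rule derivative_eq_intros has_field_derivative_pd_C[OF assms] refl)+
  show ?thesis
    unfolding vec_eq_iff grad_def by (simp add: pd_eqI[OF deriv])
qed

lemma grad_J3:
  assumes "x \<in> dom4"
  shows "grad (J3 \<beta>) x = (C1 \<beta> x * C2 \<beta> x) *s grad (C0 \<beta>) x
    + (C0 \<beta> x * C2 \<beta> x) *s grad (C1 \<beta>) x + (C0 \<beta> x * C1 \<beta> x) *s grad (C2 \<beta>) x"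
proof -
  have deriv: "((\<lambda>t. J3 \<beta> (coord_line x i t)) has_field_derivative
      (C1 \<beta> x * C2 \<beta> x) * pd i (C0 \<beta>) x + (C0 \<beta> x * C2 \<beta> x) * pd i (C1 \<beta>) x
      + (C0 \<beta> x * C1 \<beta> x) * pd i (C2 \<beta>) x) (at (x$i))" for i
    unfolding J3_def
    by (rule derivative_eq_intros has_field_derivative_pd_C[OF assms] refl)+
      (simp add: algebra_simps)
  show ?thesis
    unfolding vec_eq_iff grad_def
    by (simp only: pd_eqI[OF deriv] vector_add_component vector_smult_component vec_lambda_beta simp_thms)
qed

section \<open>Conservation\<close>

lemma phi_nth:
  "phi \<beta> x $ 0 = x$1" "phi \<beta> x $ 1 = x$2" "phi \<beta> x $ 2 = x$3"
  "x$0 \<noteq> 0 \<Longrightarrow> x$0 * phi \<beta> x $ 3 = x$1 * x$3 + \<beta> * x$2"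
  by (simp_all add: phi_def)

lemma C0_phi:
  assumes "x \<in> dom4"
  shows "C0 \<beta> (phi \<beta> x) = C1 \<beta> x"
  using assms unfolding dom4_iff C0_def C1_def phi_def
  by (simp add: field_simps power2_eq_square)

lemma C1_phi:
  assumes "x \<in> dom4" and "phi \<beta> x \<in> dom4"
  shows "C1 \<beta> (phi \<beta> x) = C2 \<beta> x"
proof -
  let ?y = "phi \<beta> x $ 3"
  have nz: "x$0 \<noteq> 0" "x$1 \<noteq> 0" "x$2 \<noteq> 0" "x$3 \<noteq> 0" "?y \<noteq> 0"
    using assms unfolding dom4_iff by auto
  have y: "x$0 * ?y = x$1 * x$3 + \<beta> * x$2"
    using nz by (simp add: phi_nth)
  have "C1 \<beta> (phi \<beta> x) = ?y * (x$1 * ?y + (x$2)^2 + x$0 * x$3) / (x$1 * x$3 * ?y)"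
    unfolding C1_def phi_nth(1-3) using y by algebra
  also have "\<dots> = (x$1 * (x$0 * ?y) + x$0 * (x$2)^2 + (x$0)^2 * x$3) / (x$0 * x$1 * x$3)"
    using nz by (simp add: field_simps power2_eq_square)
  also have "\<dots> = C2 \<beta> x"
    unfolding C2_def y by (simp add: algebra_simps power2_eq_square)
  finally show ?thesis .
qed

lemma C2_phi:
  assumes "x \<in> dom4" and "phi \<beta> x \<in> dom4"
  shows "C2 \<beta> (phi \<beta> x) = C0 \<beta> x"
proof -
  let ?y = "phi \<beta> x $ 3"
  have nz: "x$0 \<noteq> 0" "x$1 \<noteq> 0" "x$2 \<noteq> 0" "x$3 \<noteq> 0" "?y \<noteq> 0"
    using assms unfolding dom4_iff by auto
  have y: "x$0 * ?y = x$1 * x$3 + \<beta> * x$2"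
    using nz by (simp add: phi_nth)
  have "C2 \<beta> (phi \<beta> x) = ?y * (x$0 * x$3 + (x$1)^2 + (x$2)^2) / (x$1 * x$2 * ?y)"
    unfolding C2_def phi_nth(1-3) using y by algebra
  also have "\<dots> = C0 \<beta> x"
    unfolding C0_def using nz by simp
  finally show ?thesis .
qed

lemma J_phi:
  assumes "x \<in> dom4" and "phi \<beta> x \<in> dom4"
  shows "J1 \<beta> (phi \<beta> x) = J1 \<beta> x \<and> J2 \<beta> (phi \<beta> x) = J2 \<beta> x \<and> J3 \<beta> (phi \<beta> x) = J3 \<beta> x"
  unfolding J1_def J2_def J3_def C0_phi[OF assms(1)] C1_phi[OF assms] C2_phi[OF assms]
  by (simp add: algebra_simps)

section \<open>The Poisson algebra of the C_j\<close>

definition poisson_form :: "complex^4 \<Rightarrow> complex^4 \<Rightarrow> complex^4 \<Rightarrow> complex" where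
  "poisson_form x u v = (\<Sum>i\<in>UNIV. \<Sum>j\<in>UNIV. u$i * v$j * pstruct x i j)"

lemma pbracket_eq_poisson_form: "pbracket F G x = poisson_form x (grad F x) (grad G x)"
  by (simp add: pbracket_def poisson_form_def grad_def)

lemma wcoef_values:
  "wcoef 0 0 = 0" "wcoef 0 1 = 1" "wcoef 0 2 = 1" "wcoef 0 3 = 2"
  "wcoef 1 0 = -1" "wcoef 1 1 = 0" "wcoef 1 2 = 1" "wcoef 1 3 = 1"
  "wcoef 2 0 = -1" "wcoef 2 1 = -1" "wcoef 2 2 = 0" "wcoef 2 3 = 1"
  "wcoef 3 0 = -2" "wcoef 3 1 = -1" "wcoef 3 2 = -1" "wcoef 3 3 = 0"
  by (simp_all add: wcoef_def)

lemma wcoef_skew: "wcoef j i = - wcoef i j"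
  using exhaust_4_from_0[of i] exhaust_4_from_0[of j] by (elim disjE) (simp_all add: wcoef_values)

lemma pstruct_skew: "pstruct x j i = - pstruct x i j"
  unfolding pstruct_def wcoef_skew[of j i] by simp

lemma poisson_form_skew: "poisson_form x v u = - poisson_form x u v"
proof -
  have swap: "v$j * u$i * pstruct x j i = - (u$i * v$j * pstruct x i j)" for i j
    unfolding pstruct_skew[of x j i] by simp
  have "poisson_form x v u = (\<Sum>i\<in>UNIV. \<Sum>j\<in>UNIV. v$j * u$i * pstruct x j i)"
    unfolding poisson_form_def by (rule sum.swap)
  also have "\<dots> = - poisson_form x u v"
    unfolding swap poisson_form_def by (simp add: sum_negf)
  finally show ?thesis .
qed

lemma poisson_form_self [simp]: "poisson_form x u u = 0"
  using poisson_form_skew[of x u u] by simp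

lemma poisson_form_add_left: "poisson_form x (u + v) w = poisson_form x u w + poisson_form x v w"
  by (simp add: poisson_form_def distrib_right sum.distrib)

lemma poisson_form_scale_left: "poisson_form x (c *s u) w = c * poisson_form x u w"
  by (simp add: poisson_form_def sum_distrib_left mult.assoc)

lemma poisson_form_add_right: "poisson_form x w (u + v) = poisson_form x w u + poisson_form x w v"
  using poisson_form_add_left poisson_form_skew by (metis minus_add_distrib)

lemma poisson_form_scale_right: "poisson_form x w (c *s u) = c * poisson_form x w u"
  using poisson_form_scale_left poisson_form_skew by (metis mult_minus_right)

text \<open>In the logarithmic derivatives x_i d/dx_i the bracket has the constant coefficients wcoef;
  scaled by the denominators of the C_j they are polynomials.\<close>

lemma pbracket_scaled_log_derivatives:
  "pbracket F G x * (d * e) =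
    (\<Sum>i\<in>UNIV. \<Sum>j\<in>UNIV. wcoef i j * (x$i * pd i F x * d) * (x$j * pd j G x * e))"
  unfolding pbracket_def pstruct_def sum_distrib_right
  by (intro sum.cong refl) (simp add: ac_simps)

lemma log_derivative_C0:
  assumes "x \<in> dom4"
  shows "x$0 * pd 0 (C0 \<beta>) x * (x$1 * x$2) = x$0 * x$3"
    and "x$1 * pd 1 (C0 \<beta>) x * (x$1 * x$2) = (x$1)^2 - x$0 * x$3 - (x$2)^2"
    and "x$2 * pd 2 (C0 \<beta>) x * (x$1 * x$2) = (x$2)^2 - x$0 * x$3 - (x$1)^2"
    and "x$3 * pd 3 (C0 \<beta>) x * (x$1 * x$2) = x$0 * x$3"
  using assms unfolding pd_C0[OF assms] dom4_iff by (simp_all add: field_simps power2_eq_square)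

lemma log_derivative_C1:
  assumes "x \<in> dom4"
  shows "x$0 * pd 0 (C1 \<beta>) x * (x$0 * x$2 * x$3) = - ((x$1)^2 * x$3) - \<beta> * x$1 * x$2"
    and "x$1 * pd 1 (C1 \<beta>) x * (x$0 * x$2 * x$3) = 2 * (x$1)^2 * x$3 + \<beta> * x$1 * x$2"
    and "x$2 * pd 2 (C1 \<beta>) x * (x$0 * x$2 * x$3) = x$0 * (x$2)^2 - x$0 * (x$3)^2 - (x$1)^2 * x$3"
    and "x$3 * pd 3 (C1 \<beta>) x * (x$0 * x$2 * x$3) = x$0 * (x$3)^2 - x$0 * (x$2)^2 - \<beta> * x$1 * x$2"
  using assms unfolding pd_C1[OF assms] dom4_iff by (simp_all add: field_simps power2_eq_square)

lemma log_derivative_C2: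
  assumes "x \<in> dom4"
  shows "x$0 * pd 0 (C2 \<beta>) x * (x$0 * x$1 * x$3) = (x$0)^2 * x$3 - (x$1)^2 * x$3 - \<beta> * x$1 * x$2"
    and "x$1 * pd 1 (C2 \<beta>) x * (x$0 * x$1 * x$3) = (x$1)^2 * x$3 - (x$0)^2 * x$3 - x$0 * (x$2)^2"
    and "x$2 * pd 2 (C2 \<beta>) x * (x$0 * x$1 * x$3) = 2 * x$0 * (x$2)^2 + \<beta> * x$1 * x$2"
    and "x$3 * pd 3 (C2 \<beta>) x * (x$0 * x$1 * x$3) = - (x$0 * (x$2)^2) - \<beta> * x$1 * x$2"
  using assms unfolding pd_C2[OF assms] dom4_iff by (simp_all add: field_simps power2_eq_square)

lemma pbracket_C0_C1:
  assumes "x \<in> dom4"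
  shows "pbracket (C0 \<beta>) (C1 \<beta>) x = C0 \<beta> x * C1 \<beta> x - 2 * C2 \<beta> x"
proof -
  have nz: "x$0 \<noteq> 0" "x$1 \<noteq> 0" "x$2 \<noteq> 0" "x$3 \<noteq> 0"
    using assms unfolding dom4_iff by auto
  have "pbracket (C0 \<beta>) (C1 \<beta>) x * ((x$1 * x$2) * (x$0 * x$2 * x$3))
      = (x$0 * x$3 + (x$1)^2 + (x$2)^2) * (x$0 * (x$3)^2 + (x$1)^2 * x$3 + x$0 * (x$2)^2 + \<beta> * x$1 * x$2)
        - 2 * ((x$0)^2 * x$3 + (x$1)^2 * x$3 + x$0 * (x$2)^2 + \<beta> * x$1 * x$2) * (x$2)^2"
    unfolding pbracket_scaled_log_derivatives sum_UNIV_4_from_0 log_derivative_C0[OF assms] log_derivative_C1[OF assms] wcoef_values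
    by algebra
  also have "\<dots> = (C0 \<beta> x * C1 \<beta> x - 2 * C2 \<beta> x) * ((x$1 * x$2) * (x$0 * x$2 * x$3))"
    unfolding C0_def C1_def C2_def using nz by (simp add: field_simps power2_eq_square)
  finally show ?thesis
    using nz by simp
qed

lemma pbracket_C1_C2:
  assumes "x \<in> dom4"
  shows "pbracket (C1 \<beta>) (C2 \<beta>) x = C1 \<beta> x * C2 \<beta> x - 2 * C0 \<beta> x"
proof -
  have nz: "x$0 \<noteq> 0" "x$1 \<noteq> 0" "x$2 \<noteq> 0" "x$3 \<noteq> 0"
    using assms unfolding dom4_iff by auto
  have "pbracket (C1 \<beta>) (C2 \<beta>) x * ((x$0 * x$2 * x$3) * (x$0 * x$1 * x$3))
      = (x$0 * (x$3)^2 + (x$1)^2 * x$3 + x$0 * (x$2)^2 + \<beta> * x$1 * x$2)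
          * ((x$0)^2 * x$3 + (x$1)^2 * x$3 + x$0 * (x$2)^2 + \<beta> * x$1 * x$2)
        - 2 * (x$0 * x$3 + (x$1)^2 + (x$2)^2) * ((x$0)^2 * (x$3)^2)"
    unfolding pbracket_scaled_log_derivatives sum_UNIV_4_from_0 log_derivative_C1[OF assms] log_derivative_C2[OF assms] wcoef_values
    by algebra
  also have "\<dots> = (C1 \<beta> x * C2 \<beta> x - 2 * C0 \<beta> x) * ((x$0 * x$2 * x$3) * (x$0 * x$1 * x$3))"
    unfolding C0_def C1_def C2_def using nz by (simp add: field_simps power2_eq_square)
  finally show ?thesis
    using nz by simp
qed

lemma pbracket_C2_C0:
  assumes "x \<in> dom4"
  shows "pbracket (C2 \<beta>) (C0 \<beta>) x = C2 \<beta> x * C0 \<beta> x - 2 * C1 \<beta> x"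
proof -
  have nz: "x$0 \<noteq> 0" "x$1 \<noteq> 0" "x$2 \<noteq> 0" "x$3 \<noteq> 0"
    using assms unfolding dom4_iff by auto
  have "pbracket (C2 \<beta>) (C0 \<beta>) x * ((x$0 * x$1 * x$3) * (x$1 * x$2))
      = ((x$0)^2 * x$3 + (x$1)^2 * x$3 + x$0 * (x$2)^2 + \<beta> * x$1 * x$2) * (x$0 * x$3 + (x$1)^2 + (x$2)^2)
        - 2 * (x$0 * (x$3)^2 + (x$1)^2 * x$3 + x$0 * (x$2)^2 + \<beta> * x$1 * x$2) * (x$1)^2"
    unfolding pbracket_scaled_log_derivatives sum_UNIV_4_from_0 log_derivative_C2[OF assms] log_derivative_C0[OF assms] wcoef_values
    by algebra
  also have "\<dots> = (C2 \<beta> x * C0 \<beta> x - 2 * C1 \<beta> x) * ((x$0 * x$1 * x$3) * (x$1 * x$2))"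
    unfolding C0_def C1_def C2_def using nz by (simp add: field_simps power2_eq_square)
  finally show ?thesis
    using nz by simp
qed

lemma poisson_form_grad_J1_grad_C:
  assumes "x \<in> dom4"
  shows "poisson_form x (grad (J1 \<beta>) x) (grad (C0 \<beta>) x) = 0"
    and "poisson_form x (grad (J1 \<beta>) x) (grad (C1 \<beta>) x) = 0"
    and "poisson_form x (grad (J1 \<beta>) x) (grad (C2 \<beta>) x) = 0"
proof -
  let ?g0 = "grad (C0 \<beta>) x" and ?g1 = "grad (C1 \<beta>) x" and ?g2 = "grad (C2 \<beta>) x"
  let ?c0 = "C0 \<beta> x" and ?c1 = "C1 \<beta> x" and ?c2 = "C2 \<beta> x"
  have b01: "poisson_form x ?g0 ?g1 = ?c0 * ?c1 - 2 * ?c2"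
    and b12: "poisson_form x ?g1 ?g2 = ?c1 * ?c2 - 2 * ?c0"
    and b20: "poisson_form x ?g2 ?g0 = ?c2 * ?c0 - 2 * ?c1"
    using pbracket_C0_C1[OF assms] pbracket_C1_C2[OF assms] pbracket_C2_C0[OF assms]
    unfolding pbracket_eq_poisson_form by simp_all
  have b10: "poisson_form x ?g1 ?g0 = - (?c0 * ?c1 - 2 * ?c2)"
    and b21: "poisson_form x ?g2 ?g1 = - (?c1 * ?c2 - 2 * ?c0)"
    and b02: "poisson_form x ?g0 ?g2 = - (?c2 * ?c0 - 2 * ?c1)"
    unfolding b01[symmetric] b12[symmetric] b20[symmetric] by (rule poisson_form_skew)+
  show "poisson_form x (grad (J1 \<beta>) x) ?g0 = 0" "poisson_form x (grad (J1 \<beta>) x) ?g1 = 0"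
    "poisson_form x (grad (J1 \<beta>) x) ?g2 = 0"
    unfolding grad_J1[OF assms] poisson_form_add_left poisson_form_scale_left poisson_form_self
      b01 b12 b20 b10 b21 b02
    by algebra+
qed

lemma pbracket_J1_J2:
  assumes "x \<in> dom4"
  shows "pbracket (J1 \<beta>) (J2 \<beta>) x = 0"
  unfolding pbracket_eq_poisson_form grad_J2[OF assms] poisson_form_add_right
  by (simp add: poisson_form_grad_J1_grad_C[OF assms])

lemma pbracket_J1_J3:
  assumes "x \<in> dom4"
  shows "pbracket (J1 \<beta>) (J3 \<beta>) x = 0"
  unfolding pbracket_eq_poisson_form grad_J3[OF assms] poisson_form_add_right poisson_form_scale_right
  by (simp add: poisson_form_grad_J1_grad_C[OF assms])

section \<open>Functional independence\<close>

lemma homogeneous_3x3_only_trivial_solution: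
  fixes a b c :: "'a::field"
  assumes det: "p1 * (q2 * r3 - q3 * r2) - q1 * (p2 * r3 - p3 * r2) + r1 * (p2 * q3 - p3 * q2) \<noteq> 0"
    and e1: "p1 * a + q1 * b + r1 * c = 0"
    and e2: "p2 * a + q2 * b + r2 * c = 0"
    and e3: "p3 * a + q3 * b + r3 * c = 0"
  shows "a = 0 \<and> b = 0 \<and> c = 0"
proof -
  let ?det = "p1 * (q2 * r3 - q3 * r2) - q1 * (p2 * r3 - p3 * r2) + r1 * (p2 * q3 - p3 * q2)"
  have "?det * a = (q2 * r3 - q3 * r2) * (p1 * a + q1 * b + r1 * c)
      - (q1 * r3 - q3 * r1) * (p2 * a + q2 * b + r2 * c) + (q1 * r2 - q2 * r1) * (p3 * a + q3 * b + r3 * c)"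
    "?det * b = (p3 * r2 - p2 * r3) * (p1 * a + q1 * b + r1 * c)
      + (p1 * r3 - p3 * r1) * (p2 * a + q2 * b + r2 * c) + (p2 * r1 - p1 * r2) * (p3 * a + q3 * b + r3 * c)"
    "?det * c = (p2 * q3 - p3 * q2) * (p1 * a + q1 * b + r1 * c)
      + (p3 * q1 - p1 * q3) * (p2 * a + q2 * b + r2 * c) + (p1 * q2 - p2 * q1) * (p3 * a + q3 * b + r3 * c)"
    by algebra+
  with det show ?thesis
    unfolding e1 e2 e3 by simp
qed

definition lin_independent3 :: "'a::field^'n \<Rightarrow> 'a^'n \<Rightarrow> 'a^'n \<Rightarrow> bool" where
  "lin_independent3 u v w \<longleftrightarrow> (\<forall>a b c. a *s u + b *s v + c *s w = 0 \<longrightarrow> a = 0 \<and> b = 0 \<and> c = 0)"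

lemma lin_independent3_if_minor_nonzero:
  fixes u v w :: "'a::field^'n"
  assumes "u$i * (v$j * w$k - v$k * w$j) - v$i * (u$j * w$k - u$k * w$j)
      + w$i * (u$j * v$k - u$k * v$j) \<noteq> 0"
  shows "lin_independent3 u v w"
  unfolding lin_independent3_def
proof (intro allI impI)
  fix a b c :: 'a
  assume "a *s u + b *s v + c *s w = 0"
  then have "(a *s u + b *s v + c *s w) $ l = 0" for l
    by simp
  then have "u$l * a + v$l * b + w$l * c = 0" for l
    by (simp add: mult.commute)
  with assms show "a = 0 \<and> b = 0 \<and> c = 0"
    by (intro homogeneous_3x3_only_trivial_solution)
qed

lemma lin_independent3_combination:
  fixes u v w :: "'a::field^'n"
  assumes "lin_independent3 u v w"
    and "m11 * (m22 * m33 - m23 * m32) - m12 * (m21 * m33 - m23 * m31)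
      + m13 * (m21 * m32 - m22 * m31) \<noteq> 0"
  shows "lin_independent3 (m11 *s u + m12 *s v + m13 *s w) (m21 *s u + m22 *s v + m23 *s w)
    (m31 *s u + m32 *s v + m33 *s w)"
  unfolding lin_independent3_def
proof (intro allI impI)
  fix a b c :: 'a
  assume "a *s (m11 *s u + m12 *s v + m13 *s w) + b *s (m21 *s u + m22 *s v + m23 *s w)
    + c *s (m31 *s u + m32 *s v + m33 *s w) = 0"
  then have "(m11 * a + m21 * b + m31 * c) *s u + (m12 * a + m22 * b + m32 * c) *s v
    + (m13 * a + m23 * b + m33 * c) *s w = 0"
    by (simp add: vec_eq_iff algebra_simps)
  with assms(1) have e1: "m11 * a + m21 * b + m31 * c = 0"
    and e2: "m12 * a + m22 * b + m32 * c = 0" and e3: "m13 * a + m23 * b + m33 * c = 0"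
    unfolding lin_independent3_def by blast+
  have det: "m11 * (m22 * m33 - m23 * m32) - m21 * (m12 * m33 - m13 * m32)
      + m31 * (m12 * m23 - m13 * m22) \<noteq> 0"
    using assms(2) by (simp add: algebra_simps)
  show "a = 0 \<and> b = 0 \<and> c = 0"
    using homogeneous_3x3_only_trivial_solution[OF det e1 e2 e3] .
qed

lemma lin_independent3_grad_J:
  assumes "x \<in> dom4"
    and "C0 \<beta> x \<noteq> C1 \<beta> x" "C1 \<beta> x \<noteq> C2 \<beta> x" "C2 \<beta> x \<noteq> C0 \<beta> x"
    and "lin_independent3 (grad (C0 \<beta>) x) (grad (C1 \<beta>) x) (grad (C2 \<beta>) x)"
  shows "lin_independent3 (grad (J1 \<beta>) x) (grad (J2 \<beta>) x) (grad (J3 \<beta>) x)"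
proof -
  let ?c0 = "C0 \<beta> x" and ?c1 = "C1 \<beta> x" and ?c2 = "C2 \<beta> x"
  have "(?c1 * ?c2 - 2 * ?c0) * (1 * (?c0 * ?c1) - 1 * (?c0 * ?c2))
      - (?c0 * ?c2 - 2 * ?c1) * (1 * (?c0 * ?c1) - 1 * (?c1 * ?c2))
      + (?c0 * ?c1 - 2 * ?c2) * (1 * (?c0 * ?c2) - 1 * (?c1 * ?c2))
    = 2 * (?c0 - ?c1) * (?c1 - ?c2) * (?c2 - ?c0)"
    by algebra
  also have "\<dots> \<noteq> 0"
    using assms(2-4) by simp
  finally have "lin_independent3
      ((?c1 * ?c2 - 2 * ?c0) *s grad (C0 \<beta>) x + (?c0 * ?c2 - 2 * ?c1) *s grad (C1 \<beta>) x
        + (?c0 * ?c1 - 2 * ?c2) *s grad (C2 \<beta>) x)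
      (1 *s grad (C0 \<beta>) x + 1 *s grad (C1 \<beta>) x + 1 *s grad (C2 \<beta>) x)
      ((?c1 * ?c2) *s grad (C0 \<beta>) x + (?c0 * ?c2) *s grad (C1 \<beta>) x
        + (?c0 * ?c1) *s grad (C2 \<beta>) x)"
    by (rule lin_independent3_combination[OF assms(5)])
  then show ?thesis
    unfolding grad_J1[OF assms(1)] grad_J2[OF assms(1)] grad_J3[OF assms(1)] by simp
qed

definition base_point :: "complex \<Rightarrow> complex^4" where
  "base_point t = (\<chi> i. if i = 3 then 3 * t else t)"

lemma base_point_in_dom4: "t \<noteq> 0 \<Longrightarrow> base_point t \<in> dom4"
  by (simp add: dom4_def base_point_def)

lemma C_base_point:
  assumes "t \<noteq> 0" and "\<beta> = s * t"
  shows "C0 \<beta> (base_point t) = 5"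
    and "C1 \<beta> (base_point t) = (13 + s) / 3"
    and "C2 \<beta> (base_point t) = (7 + s) / 3"
  using assms by (simp_all add: base_point_def C0_def C1_def C2_def field_simps power2_eq_square)

lemma lin_independent3_grad_C_base_point:
  assumes "t \<noteq> 0" and "\<beta> = s * t" and "s\<^sup>2 + 15 * s + 8 \<noteq> 0"
  shows "lin_independent3 (grad (C0 \<beta>) (base_point t))
    (grad (C1 \<beta>) (base_point t)) (grad (C2 \<beta>) (base_point t))"
proof (rule lin_independent3_if_minor_nonzero[where i = 0 and j = 1 and k = 2])
  let ?p = "base_point t"
  have p: "?p \<in> dom4"
    using assms(1) by (rule base_point_in_dom4)
  let ?minor = "grad (C0 \<beta>) ?p $ 0 * (grad (C1 \<beta>) ?p $ 1 * grad (C2 \<beta>) ?p $ 2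
      - grad (C1 \<beta>) ?p $ 2 * grad (C2 \<beta>) ?p $ 1)
    - grad (C1 \<beta>) ?p $ 0 * (grad (C0 \<beta>) ?p $ 1 * grad (C2 \<beta>) ?p $ 2
      - grad (C0 \<beta>) ?p $ 2 * grad (C2 \<beta>) ?p $ 1)
    + grad (C2 \<beta>) ?p $ 0 * (grad (C0 \<beta>) ?p $ 1 * grad (C1 \<beta>) ?p $ 2
      - grad (C0 \<beta>) ?p $ 2 * grad (C1 \<beta>) ?p $ 1)"
  have "?minor = - (s\<^sup>2 + 15 * s + 8) / (3 * t ^ 3)"
    unfolding grad_def vec_lambda_beta pd_C0[OF p] pd_C1[OF p] pd_C2[OF p]
    using assms(1,2) by (simp add: base_point_def field_simps power2_eq_square power3_eq_cube)
  also have "\<dots> \<noteq> 0"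
    using assms(1,3) by (simp del: minus_add_distrib)
  finally show "?minor \<noteq> 0" .
qed

lemma lin_independent3_grad_J_base_point:
  assumes "t \<noteq> 0" and "\<beta> = s * t" and "s \<noteq> 2" "s \<noteq> 8" and "s\<^sup>2 + 15 * s + 8 \<noteq> 0"
  shows "lin_independent3 (grad (J1 \<beta>) (base_point t))
    (grad (J2 \<beta>) (base_point t)) (grad (J3 \<beta>) (base_point t))"
  using assms
  by (intro lin_independent3_grad_J base_point_in_dom4 lin_independent3_grad_C_base_point)
    (simp_all add: C_base_point field_simps)

lemma ex_lin_independent3_grad_J: "\<exists>x\<in>dom4. lin_independent3 (grad (J1 \<beta>) x) (grad (J2 \<beta>) x) (grad (J3 \<beta>) x)"
proof (cases "\<beta> = 0")
  case True
  then show ?thesis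
    using base_point_in_dom4 lin_independent3_grad_J_base_point[of 1 \<beta> 0] by auto
next
  case False
  then show ?thesis
    using base_point_in_dom4 lin_independent3_grad_J_base_point[of \<beta> \<beta> 1] by auto
qed

section \<open>Orbits of the recurrence\<close>

lemma chebyshev_solution:
  fixes y :: "nat \<Rightarrow> complex"
  assumes "J \<noteq> 0" "J \<noteq> 2"
    and recurrence: "\<And>m. y (Suc (Suc m)) = J * y (Suc m) - y m - d"
  shows "y n = (2 * y 0 - 2 * y 1 / J - 2 * d * (J - 1) / (J * (J - 2))) * chebT n (J / 2)
    + (- y 0 + (2 * y 1 + d) / J) * chebU n (J / 2) + d / (J - 2)"
proof -
  define c where "c = d / (J - 2)"
  define A where "A = 2 * y 0 - 2 * y 1 / J - 2 * c * (J - 1) / J"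
  define B where "B = - y 0 + (2 * y 1 + d) / J"
  have d: "d = c * (J - 2)"
    using assms(2) by (simp add: c_def)
  have "y m = A * chebT m (J / 2) + B * chebU m (J / 2) + c
    \<and> y (Suc m) = A * chebT (Suc m) (J / 2) + B * chebU (Suc m) (J / 2) + c" for m
  proof (induction m)
    case 0
    show ?case
      using assms(1) unfolding A_def B_def d by (simp add: field_simps)
  next
    case (Suc m)
    then show ?case
      unfolding recurrence d by (simp add: algebra_simps)
  qed
  moreover have "A = 2 * y 0 - 2 * y 1 / J - 2 * d * (J - 1) / (J * (J - 2))"
    using assms unfolding A_def c_def by (simp add: field_simps)
  ultimately show ?thesis
    unfolding B_def c_def by blast
qed

locale recurrence_orbit =
  fixes \<beta> :: complex and x :: "nat \<Rightarrow> complex"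
  assumes nonzero: "x n \<noteq> 0"
    and recurrence: "x (n + 4) * x n = x (n + 3) * x (n + 1) + \<beta> * x (n + 2)"
begin

definition window :: "nat \<Rightarrow> complex^4" where
  "window n = init4 (\<lambda>k. x (n + k))"

lemma window_nth [simp]:
  "window n $ 0 = x n" "window n $ 1 = x (n + 1)" "window n $ 2 = x (n + 2)" "window n $ 3 = x (n + 3)"
  by (simp_all add: window_def init4_def)

lemma window_0: "window 0 = init4 x"
  by (simp add: window_def)

lemma window_in_dom4: "window n \<in> dom4"
  by (simp add: dom4_iff nonzero)

lemma window_Suc: "window (Suc n) = phi \<beta> (window n)"
proof -
  have "x (n + 4) = (x (n + 1) * x (n + 3) + \<beta> * x (n + 2)) / x n"
    using recurrence[of n] nonzero[of n] by (simp add: eq_divide_eq mult.commute)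
  then have "window (Suc n) $ i = phi \<beta> (window n) $ i" for i
    using exhaust_4_from_0[of i] by (auto simp: phi_def eval_nat_numeral)
  then show ?thesis
    by (simp add: vec_eq_iff)
qed

lemma C_window_Suc:
  "C0 \<beta> (window (Suc n)) = C1 \<beta> (window n)"
  "C1 \<beta> (window (Suc n)) = C2 \<beta> (window n)"
  "C2 \<beta> (window (Suc n)) = C0 \<beta> (window n)"
  using C0_phi C1_phi C2_phi window_in_dom4 window_Suc by metis+

lemma J1_window: "J1 \<beta> (window n) = J1 \<beta> (init4 x)"
proof (induction n)
  case 0
  show ?case by (simp add: window_0)
next
  case (Suc n)
  then show ?case
    using J_phi window_in_dom4 window_Suc by metis
qed

lemma C0_window_add_3: "C0 \<beta> (window (n + 3)) = C0 \<beta> (window n)"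
  by (simp add: eval_nat_numeral C_window_Suc)

lemma C0_window_periodic: "C0 \<beta> (window (3 * m + j)) = C0 \<beta> (window j)"
proof (induction m)
  case (Suc m)
  then show ?case
    using C0_window_add_3[of "3 * m + j"] by (simp add: add_ac)
qed simp

lemma Cj_init4: "j < 3 \<Longrightarrow> Cj \<beta> j (init4 x) = C0 \<beta> (window j)"
  by (auto simp: Cj_def window_0[symmetric] C_window_Suc numeral_2_eq_2 numeral_3_eq_3 less_Suc_eq)

lemma three_step_relation:
  "x (n + 6) - J1 \<beta> (init4 x) * x (n + 3) + x n = - \<beta> * C0 \<beta> (window n)"
proof -
  have nz: "x n \<noteq> 0" "x (n + 1) \<noteq> 0" "x (n + 2) \<noteq> 0" "x (n + 3) \<noteq> 0"
    by (simp_all add: nonzero)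
  have x4: "x (n + 4) = (x (n + 3) * x (n + 1) + \<beta> * x (n + 2)) / x n"
    using recurrence[of n] nz by (simp add: eq_divide_eq)
  have "x (n + 5) * x (n + 1) = x (n + 4) * x (n + 2) + \<beta> * x (n + 3)"
    using recurrence[of "n + 1"] by (simp add: numeral_eq_Suc)
  then have x5: "x (n + 5) = (x (n + 4) * x (n + 2) + \<beta> * x (n + 3)) / x (n + 1)"
    using nz by (simp add: eq_divide_eq)
  have "x (n + 6) * x (n + 2) = x (n + 5) * x (n + 3) + \<beta> * x (n + 4)"
    using recurrence[of "n + 2"] by (simp add: numeral_eq_Suc)
  then have x6: "x (n + 6) = (x (n + 5) * x (n + 3) + \<beta> * x (n + 4)) / x (n + 2)"
    using nz by (simp add: eq_divide_eq)
  show ?thesis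
    unfolding J1_window[of n, symmetric]
    unfolding J1_def C0_def C1_def C2_def window_nth x6 x5 x4
    using nz by (simp add: field_simps power2_eq_square)
qed

lemma order_9_recurrence:
  "x (n + 9) - (J1 \<beta> (init4 x) + 1) * (x (n + 6) - x (n + 3)) - x n = 0"
proof -
  have "x (n + 9) - (J1 \<beta> (init4 x) + 1) * (x (n + 6) - x (n + 3)) - x n
      = (x (n + 3 + 6) - J1 \<beta> (init4 x) * x (n + 3 + 3) + x (n + 3))
        - (x (n + 6) - J1 \<beta> (init4 x) * x (n + 3) + x n)"
    by (simp add: algebra_simps)
  also have "\<dots> = 0"
    unfolding three_step_relation C0_window_add_3 by simp
  finally show ?thesis .
qed

lemma explicit_solution:
  assumes "J1 \<beta> (init4 x) \<noteq> 0" "J1 \<beta> (init4 x) \<noteq> 2" and "j < 3"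
  shows "x (3 * n + j) =
    (2 * x j - 2 * x (j + 3) / J1 \<beta> (init4 x)
      - 2 * \<beta> * Cj \<beta> j (init4 x) * (J1 \<beta> (init4 x) - 1) / (J1 \<beta> (init4 x) * (J1 \<beta> (init4 x) - 2)))
      * chebT n (J1 \<beta> (init4 x) / 2)
    + (- x j + (2 * x (j + 3) + \<beta> * Cj \<beta> j (init4 x)) / J1 \<beta> (init4 x))
      * chebU n (J1 \<beta> (init4 x) / 2)
    + \<beta> * Cj \<beta> j (init4 x) / (J1 \<beta> (init4 x) - 2)"
proof -
  have "x (3 * Suc (Suc m) + j)
      = J1 \<beta> (init4 x) * x (3 * Suc m + j) - x (3 * m + j) - \<beta> * Cj \<beta> j (init4 x)" for m
    using three_step_relation[of "3 * m + j"] unfolding C0_window_periodic Cj_init4[OF assms(3)]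
    by (simp add: algebra_simps)
  from chebyshev_solution[where y = "\<lambda>m. x (3 * m + j)", OF assms(1,2) this]
  show ?thesis
    by (simp add: add.commute mult.assoc)
qed

end

theorem theorem3p6:
  fixes \<beta> :: complex
  shows
    \<comment> \<open>J1, J2, J3 are conserved quantities of phi\<close>
    "(\<forall>x\<in>dom4. phi \<beta> x \<in> dom4 \<longrightarrow>
        J1 \<beta> (phi \<beta> x) = J1 \<beta> x \<and> J2 \<beta> (phi \<beta> x) = J2 \<beta> x \<and> J3 \<beta> (phi \<beta> x) = J3 \<beta> x)
   \<and> \<comment> \<open>they are functionally independent\<close>
     (\<exists>x\<in>dom4. \<forall>a b c :: complex.
        a *s grad (J1 \<beta>) x + b *s grad (J2 \<beta>) x + c *s grad (J3 \<beta>) x = 0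
          \<longrightarrow> a = 0 \<and> b = 0 \<and> c = 0)
   \<and> \<comment> \<open>Poisson commutation\<close>
     (\<forall>x\<in>dom4. pbracket (J1 \<beta>) (J2 \<beta>) x = 0 \<and> pbracket (J1 \<beta>) (J3 \<beta>) x = 0)
   \<and> \<comment> \<open>linear recurrence and explicit solution along orbits\<close>
     (\<forall>x :: nat \<Rightarrow> complex.
        (\<forall>n. x n \<noteq> 0) \<longrightarrow>
        (\<forall>n. x (n + 4) * x n = x (n + 3) * x (n + 1) + \<beta> * x (n + 2)) \<longrightarrow>
        (\<forall>n. x (n + 9) - (J1 \<beta> (init4 x) + 1) * (x (n + 6) - x (n + 3)) - x n = 0)
        \<and> (J1 \<beta> (init4 x) \<noteq> 0 \<longrightarrow> J1 \<beta> (init4 x) \<noteq> 2 \<longrightarrow>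
            (\<forall>n. \<forall>j<3.
               x (3 * n + j) =
                 (2 * x j - 2 * x (j + 3) / J1 \<beta> (init4 x)
                   - 2 * \<beta> * Cj \<beta> j (init4 x) * (J1 \<beta> (init4 x) - 1)
                       / (J1 \<beta> (init4 x) * (J1 \<beta> (init4 x) - 2)))
                   * chebT n (J1 \<beta> (init4 x) / 2)
                 + (- x j + (2 * x (j + 3) + \<beta> * Cj \<beta> j (init4 x)) / J1 \<beta> (init4 x))
                   * chebU n (J1 \<beta> (init4 x) / 2)
                 + \<beta> * Cj \<beta> j (init4 x) / (J1 \<beta> (init4 x) - 2))))"
proof (intro conjI)
  show "\<forall>x\<in>dom4. phi \<beta> x \<in> dom4 \<longrightarrow>
      J1 \<beta> (phi \<beta> x) = J1 \<beta> x \<and> J2 \<beta> (phi \<beta> x) = J2 \<beta> x \<and> J3 \<beta> (phi \<beta> x) = J3 \<beta> x"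
    using J_phi by blast
  show "\<exists>x\<in>dom4. \<forall>a b c :: complex.
      a *s grad (J1 \<beta>) x + b *s grad (J2 \<beta>) x + c *s grad (J3 \<beta>) x = 0 \<longrightarrow> a = 0 \<and> b = 0 \<and> c = 0"
    using ex_lin_independent3_grad_J unfolding lin_independent3_def .
  show "\<forall>x\<in>dom4. pbracket (J1 \<beta>) (J2 \<beta>) x = 0 \<and> pbracket (J1 \<beta>) (J3 \<beta>) x = 0"
    using pbracket_J1_J2 pbracket_J1_J3 by blast
qed (use recurrence_orbit.order_9_recurrence recurrence_orbit.explicit_solution
  recurrence_orbit.intro in blast)

end
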